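(* Let $k\in\mathbb N$ with $k\geq 3$. Then: (i) $f_{i,j}(n)+1=f_{i,j-1}(n)$ for all $n\in\mathbb N$ and all integers $i,j$ with $k-3\leq i\leq k-2$ and $-F(i+1)\geq j\geq 2-F(k)$; (ii) $f_{k-3,1-F(k)}(a(n))+1=f_{k-2,-F(k-1)}(n)$ for all $n\in\mathbb N$; (iii) $f_{k-3,1-F(k)}(b(n))+1=f_{k-3,-F(k-2)}(b(n)+1)$ for all $n\in\mathbb N$; (iv) $f_{k-2,1-F(k)}(n)+1=f_{k-3,-F(k-2)}(a(n)+1)$ for all $n\in\mathbb N$.
   Context: $\mathbb N=\{1,2,\dots\}$, $\varphi=\frac{1+\sqrt5}{2}$, $a(n)=\lfloor n\varphi\rfloor$, $b(n)=\lfloor n\varphi^2\rfloor$. $F$ is the Fibonacci sequence with $F(0)=0$, $F(1)=F(2)=1$, $F(n)=F(n-1)+F(n-2)$. For $i\in\mathbb Z^{\geq 0}$ and $j\in\mathbb Z$, $f_{i,j}(n)=F(i+1)a(n)+F(i)n-j$ for $n\in\mathbb N$ (the sequences $f_{i,j}$ are only defined for $i\ge 0$). *)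

theory Defs
  imports Complex_Main "HOL-Number_Theory.Fib"
begin

definition phi :: real where "phi = (1 + sqrt 5) / 2"

definition a :: "nat \<Rightarrow> nat" where "a n = nat \<lfloor>real n * phi\<rfloor>"
definition b :: "nat \<Rightarrow> nat" where "b n = nat \<lfloor>real n * phi ^ 2\<rfloor>"

text \<open>f_{i,j}(n) = F(i+1) a(n) + F(i) n - j, with F = fib (fib 0 = 0, fib 1 = 1).\<close>
definition f :: "nat \<Rightarrow> int \<Rightarrow> nat \<Rightarrow> int" where
  "f i j n = int (fib (i + 1)) * int (a n) + int (fib i) * int n - j"

end

theory Submission
  imports Defs
begin

text \<open>Write \<open>e = frac (n \<phi>)\<close>. Since \<open>\<phi>\<^sup>2 = \<phi> + 1\<close>, we get
  \<open>a(n) \<phi> = a(n) + n - e (\<phi> - 1)\<close> and \<open>b(n) \<phi> = 2 a(n) + n + e (2 - \<phi>)\<close>,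
  where \<open>e (\<phi> - 1)\<close> and \<open>e (2 - \<phi>)\<close> lie in \<open>[0, 1)\<close>. Reading off floors gives
  \<open>a(a(n)) = b(n) - 1\<close> (here \<open>e > 0\<close> is needed, i.e. the irrationality of \<open>\<phi>\<close>),
  \<open>a(a(n) + 1) = b(n) + 1\<close> and \<open>a(b(n) + 1) = a(b(n)) + 1\<close>. With these, each of
  (ii)--(iv) reduces to the Fibonacci recurrence on the coefficients, and (i) holds for
  all \<open>i, j, n\<close> by the definition of \<open>f\<close>.\<close>

lemma phi_gt_1: "1 < phi"
  and phi_lt_2: "phi < 2"
proof -
  have "2 < sqrt (5::real)" by (rule real_less_rsqrt) simp
  moreover have "sqrt (5::real) < 3" by (rule real_less_lsqrt) simp_all
  ultimately show "1 < phi" "phi < 2" by (simp_all add: phi_def)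
qed

lemma phi_square: "phi\<^sup>2 = phi + 1"
  by (simp add: phi_def power2_eq_square field_simps)

text \<open>Descent: \<open>(m, n) \<mapsto> (n, m - n)\<close> maps solutions to solutions with smaller \<open>m\<close>.\<close>

lemma golden_equation_trivial:
  fixes m n :: nat
  assumes "m\<^sup>2 = m * n + n\<^sup>2"
  shows "n = 0"
  using assms
proof (induction m arbitrary: n rule: less_induct)
  case (less m)
  show "n = 0"
  proof (rule ccontr)
    assume "n \<noteq> 0"
    have "n < m"
    proof (rule ccontr)
      assume "\<not> n < m"
      then have "m\<^sup>2 \<le> m * n" by (simp add: power2_eq_square)
      with less.prems \<open>n \<noteq> 0\<close> show False by simp
    qed
    then obtain d where m: "m = n + d" by (metis less_imp_add_positive)
    from less.prems have "n\<^sup>2 = n * d + d\<^sup>2"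
      unfolding m by (simp add: power2_eq_square algebra_simps)
    with less.IH[of n d] \<open>n < m\<close> have "d = 0" by blast
    with \<open>n < m\<close> m show False by simp
  qed
qed

lemma mult_phi_not_Ints:
  assumes "n > 0"
  shows "real n * phi \<notin> \<int>"
proof
  assume "real n * phi \<in> \<int>"
  moreover have "real n * phi \<ge> 0" using phi_gt_1 by simp
  ultimately obtain m :: nat where m: "real n * phi = real m"
    by (metis Ints_cases of_int_of_nat_eq zero_le_imp_eq_int of_int_0_le_iff)
  have "real m ^ 2 = real n ^ 2 * phi\<^sup>2" by (simp flip: m add: power_mult_distrib)
  also have "\<dots> = real n ^ 2 * (phi + 1)" by (simp only: phi_square)
  also have "\<dots> = real m * real n + real n ^ 2"
    by (simp flip: m add: power2_eq_square algebra_simps)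
  finally have "m\<^sup>2 = m * n + n\<^sup>2"
    by (metis of_nat_eq_iff of_nat_add of_nat_mult of_nat_power)
  then have "n = 0" by (rule golden_equation_trivial)
  with assms show False by simp
qed

lemma frac_mult_phi_pos: "n > 0 \<Longrightarrow> frac (real n * phi) > 0"
  using mult_phi_not_Ints frac_ge_0 frac_eq_0_iff by (metis order_le_less)

lemma of_nat_a: "real (a n) = real n * phi - frac (real n * phi)"
  using phi_gt_1 by (simp add: a_def frac_def)

lemma b_eq_a_plus: "b n = a n + n"
proof -
  have "real n * phi\<^sup>2 = real n * phi + real n" by (simp add: phi_square algebra_simps)
  then have "\<lfloor>real n * phi\<^sup>2\<rfloor> = \<lfloor>real n * phi\<rfloor> + int n" by simp
  moreover have "0 \<le> \<lfloor>real n * phi\<rfloor>" using phi_gt_1 by simp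
  ultimately show ?thesis by (simp add: a_def b_def nat_add_distrib)
qed

lemma a_eqI:
  assumes "real x * phi = real m + d" and "0 \<le> d" and "d < 1"
  shows "a x = m"
proof -
  have "\<lfloor>real x * phi\<rfloor> = int m" using assms by (intro floor_unique) simp_all
  then show ?thesis by (simp add: a_def)
qed

lemma a_mult_phi: "real (a n) * phi = real (a n + n) - frac (real n * phi) * (phi - 1)"
proof -
  have "real (a n) * phi = real n * phi\<^sup>2 - frac (real n * phi) * phi"
    by (simp add: of_nat_a power2_eq_square algebra_simps)
  also have "\<dots> = real n * (phi + 1) - frac (real n * phi) * phi" by (simp only: phi_square)
  also have "\<dots> = real (a n + n) - frac (real n * phi) * (phi - 1)"
    by (simp add: of_nat_a algebra_simps)
  finally show ?thesis .
qed

lemma b_mult_phi: "real (b n) * phi = real (2 * a n + n) + frac (real n * phi) * (2 - phi)"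
proof -
  have "real (b n) * phi = real (a n) * phi + real n * phi"
    by (simp add: b_eq_a_plus distrib_right)
  also have "\<dots> = real (2 * a n + n) + frac (real n * phi) * (2 - phi)"
    unfolding a_mult_phi using of_nat_a[of n] by (simp add: algebra_simps)
  finally show ?thesis .
qed

lemma a_a:
  assumes "n > 0"
  shows "a (a n) = a n + n - 1"
proof (rule a_eqI)
  let ?e = "frac (real n * phi)"
  have "0 < ?e * (phi - 1)" using frac_mult_phi_pos[OF assms] phi_gt_1 by simp
  moreover have "?e * (phi - 1) \<le> phi - 1"
    using mult_left_le_one_le[of "phi - 1" ?e] less_imp_le[OF frac_lt_1] phi_gt_1 by simp
  ultimately
  show "0 \<le> 1 - ?e * (phi - 1)" "1 - ?e * (phi - 1) < 1" using phi_lt_2 by simp_all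
  show "real (a n) * phi = real (a n + n - 1) + (1 - ?e * (phi - 1))"
    using assms by (simp add: a_mult_phi of_nat_diff)
qed

lemma a_Suc_a: "a (a n + 1) = a n + n + 1"
proof (rule a_eqI)
  let ?e = "frac (real n * phi)"
  show "0 \<le> (1 - ?e) * (phi - 1)" using frac_lt_1[of "real n * phi"] phi_gt_1 by simp
  have "(1 - ?e) * (phi - 1) \<le> phi - 1"
    using mult_left_le_one_le[of "phi - 1" "1 - ?e"] less_imp_le[OF frac_lt_1] phi_gt_1 by simp
  then show "(1 - ?e) * (phi - 1) < 1" using phi_lt_2 by simp
  show "real (a n + 1) * phi = real (a n + n + 1) + (1 - ?e) * (phi - 1)"
    using a_mult_phi[of n] by (simp add: distrib_right algebra_simps)
qed

lemma a_b: "a (b n) = 2 * a n + n"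
proof (rule a_eqI[OF b_mult_phi])
  let ?e = "frac (real n * phi)"
  show "0 \<le> ?e * (2 - phi)" using phi_lt_2 by simp
  have "?e * (2 - phi) \<le> 2 - phi"
    using mult_left_le_one_le[of "2 - phi" ?e] less_imp_le[OF frac_lt_1] phi_lt_2 by simp
  then show "?e * (2 - phi) < 1" using phi_gt_1 by simp
qed

lemma a_Suc_b: "a (b n + 1) = a (b n) + 1"
proof (rule a_eqI)
  let ?e = "frac (real n * phi)"
  have "(1 - ?e) * (2 - phi) \<le> 2 - phi"
    using mult_left_le_one_le[of "2 - phi" "1 - ?e"] less_imp_le[OF frac_lt_1] phi_lt_2 by simp
  then show "0 \<le> 1 - (1 - ?e) * (2 - phi)" using phi_gt_1 by simp
  show "1 - (1 - ?e) * (2 - phi) < 1"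
    using frac_lt_1[of "real n * phi"] phi_lt_2 by simp
  show "real (b n + 1) * phi = real (a (b n) + 1) + (1 - (1 - ?e) * (2 - phi))"
    using b_mult_phi[of n] a_b[of n] by (simp add: distrib_right algebra_simps)
qed

lemma f_add_one: "f i j n + 1 = f i (j - 1) n"
  by (simp add: f_def)

lemma f_a:
  assumes "n > 0"
  shows "f m (1 - int (fib (m + 3))) (a n) + 1 = f (m + 1) (- int (fib (m + 2))) n"
proof -
  have "int (a (a n)) = int (a n) + int n - 1" using a_a[OF assms] assms by simp
  then show ?thesis
    by (simp only: f_def) (simp add: numeral_3_eq_3 numeral_2_eq_2 algebra_simps)
qed

lemma f_b:
  "f m (1 - int (fib (m + 3))) (b n) + 1 = f m (- int (fib (m + 1))) (b n + 1)"
proof -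
  have "int (a (b n + 1)) = int (a (b n)) + 1" by (simp only: a_Suc_b of_nat_Suc)
  then show ?thesis
    by (simp only: f_def) (simp add: numeral_3_eq_3 numeral_2_eq_2 algebra_simps)
qed

lemma f_Suc_a:
  "f (m + 1) (1 - int (fib (m + 3))) n + 1 = f m (- int (fib (m + 1))) (a n + 1)"
proof -
  have "int (a (a n + 1)) = int (a n) + int n + 1" by (simp only: a_Suc_a of_nat_add of_nat_1)
  then show ?thesis
    by (simp only: f_def) (simp add: numeral_3_eq_3 numeral_2_eq_2 algebra_simps)
qed

theorem theorem3p8:
  fixes k :: nat
  assumes "k \<ge> 3"
  shows "(\<forall>n i j. n \<ge> 1 \<longrightarrow> k - 3 \<le> i \<longrightarrow> i \<le> k - 2 \<longrightarrow>
            - int (fib (i + 1)) \<ge> j \<longrightarrow> j \<ge> 2 - int (fib k) \<longrightarrow>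
            f i j n + 1 = f i (j - 1) n)
       \<and> (\<forall>n. n \<ge> 1 \<longrightarrow>
            f (k - 3) (1 - int (fib k)) (a n) + 1 = f (k - 2) (- int (fib (k - 1))) n)
       \<and> (\<forall>n. n \<ge> 1 \<longrightarrow>
            f (k - 3) (1 - int (fib k)) (b n) + 1 = f (k - 3) (- int (fib (k - 2))) (b n + 1))
       \<and> (\<forall>n. n \<ge> 1 \<longrightarrow>
            f (k - 2) (1 - int (fib k)) n + 1 = f (k - 3) (- int (fib (k - 2))) (a n + 1))"
proof -
  obtain m where k: "k = m + 3" using assms by (metis add.commute le_Suc_ex)
  show ?thesis
    unfolding k using f_add_one f_a f_b f_Suc_a by simp
qed

end
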